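(* Let $A$ be a commutative unital ring of characteristic $0$, $n\ge4$, $k\in\{3,\ldots,n-1\}$ and $(b_1,\ldots,b_k)\in A^k$. Let $s=(1_A,n_A-2_A,1_A,2_A,\ldots,2_A)\in A^n$ (last $n-3$ entries equal to $2_A$). Suppose $(b_1,\ldots,b_k)$ can be used to reduce $s$, i.e. $(b_1,\ldots,b_k)$ is a $\lambda$-quiddity over $A$ and there exists $(c_1,\ldots,c_{n+2-k})\in A^{n+2-k}$ with $s\sim(c_1,\ldots,c_{n+2-k})\oplus(b_1,\ldots,b_k)$. Then there exist $x,y\in A$ such that $(b_1,\ldots,b_k)=(x,1_A,2_A,\ldots,2_A,y)$ or $(b_1,\ldots,b_k)=(x,2_A,\ldots,2_A,1_A,y)$ (the number of entries equal to $2_A$ being $k-3$, possibly zero).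
   Context: $k_A=k\cdot1_A$ for an integer $k$. For $a_1,\ldots,a_n\in A$, $M_n(a_1,\ldots,a_n)=\begin{pmatrix}a_n&-1\\1&0\end{pmatrix}\cdots\begin{pmatrix}a_1&-1\\1&0\end{pmatrix}$. An $n$-tuple $(a_1,\ldots,a_n)\in A^n$ is a $\lambda$-quiddity over $A$ if $M_n(a_1,\ldots,a_n)=\pm\mathrm{Id}$. For $(a_1,\ldots,a_n)\in A^n$, $(b_1,\ldots,b_m)\in A^m$, define $(a_1,\ldots,a_n)\oplus(b_1,\ldots,b_m)=(a_1+b_m,a_2,\ldots,a_{n-1},a_n+b_1,b_2,\ldots,b_{m-1})$. Write $(a_1,\ldots,a_n)\sim(b_1,\ldots,b_n)$ if $(b_1,\ldots,b_n)$ is obtained from $(a_1,\ldots,a_n)$ or from $(a_n,\ldots,a_1)$ by a cyclic permutation. *)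

theory Defs
  imports Main
begin

text \<open>2x2 matrices over a commutative ring, represented as quadruples (a,b,c,d)
  standing for the matrix with rows (a b) and (c d).\<close>
type_synonym 'a mat2 = "'a \<times> 'a \<times> 'a \<times> 'a"

fun mat2_mult :: "'a::comm_ring_1 mat2 \<Rightarrow> 'a mat2 \<Rightarrow> 'a mat2" where
  "mat2_mult (a, b, c, d) (e, f, g, h) =
     (a * e + b * g, a * f + b * h, c * e + d * g, c * f + d * h)"

definition mat2_id :: "'a::comm_ring_1 mat2" where
  "mat2_id = (1, 0, 0, 1)"

definition elem_mat :: "'a::comm_ring_1 \<Rightarrow> 'a mat2" where
  "elem_mat a = (a, -1, 1, 0)"

text \<open>M_n(a_1,...,a_n) = M(a_n) ... M(a_1): each new entry multiplies on the left.\<close>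
definition Mn :: "'a::comm_ring_1 list \<Rightarrow> 'a mat2" where
  "Mn as = foldl (\<lambda>M a. mat2_mult (elem_mat a) M) mat2_id as"

definition lambda_quiddity :: "'a::comm_ring_1 list \<Rightarrow> bool" where
  "lambda_quiddity as \<longleftrightarrow> Mn as = mat2_id \<or> Mn as = (-1, 0, 0, -1)"

text \<open>(a_1..a_n) \<oplus> (b_1..b_m) = (a_1+b_m, a_2, .., a_{n-1}, a_n+b_1, b_2, .., b_{m-1}).\<close>
definition qoplus :: "'a::comm_ring_1 list \<Rightarrow> 'a list \<Rightarrow> 'a list" where
  "qoplus as bs =
     [hd as + last bs] @ take (length as - 2) (tl as) @ [last as + hd bs]
     @ take (length bs - 2) (tl bs)"

definition qsim :: "'a list \<Rightarrow> 'a list \<Rightarrow> bool" where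
  "qsim as bs \<longleftrightarrow> (\<exists>r. bs = rotate r as \<or> bs = rotate r (rev as))"

end

theory Submission
  imports Defs
begin

text \<open>Write \<open>bs = (x, w, y)\<close>. Then \<open>M(bs) = M(y) M(w) M(x)\<close>, and the lower right entry of
  this product is minus the upper left entry of \<open>M(w)\<close>; so for a \<lambda>-quiddity that entry is \<open>\<pm>1\<close>.
  A reduction of \<open>s\<close> by \<open>bs\<close> makes \<open>w\<close> a window of length \<open>k - 2 \<le> n - 3\<close> of the cyclic
  word \<open>s\<close>, which has integer entries. A direct computation over \<open>\<int>\<close> shows that the upper left
  entry of \<open>M(w)\<close> is at least 2 unless \<open>w = (1, 2, \<dots>, 2)\<close> or \<open>w = (2, \<dots>, 2, 1)\<close>, and
  characteristic 0 transfers this to \<open>A\<close>.\<close>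

lemma of_int_eq_iff_CHAR_0:
  assumes "CHAR('a::comm_ring_1) = 0"
  shows "(of_int z :: 'a) = of_int w \<longleftrightarrow> z = w"
proof -
  have "(of_int (z - w) :: 'a) = 0 \<longleftrightarrow> z - w = 0"
    by (simp only: of_int_eq_0_iff_char_dvd assms) simp
  then show ?thesis
    by (metis eq_iff_diff_eq_0 of_int_diff)
qed

lemma mat2_mult_assoc: "mat2_mult (mat2_mult A B) C = mat2_mult A (mat2_mult B C)"
  by (cases A; cases B; cases C) (simp add: algebra_simps)

lemma mat2_mult_id_right [simp]: "mat2_mult M mat2_id = M"
  by (cases M) (simp add: mat2_id_def)

lemma foldl_elem_mat:
  "foldl (\<lambda>M a. mat2_mult (elem_mat a) M) M0 xs = mat2_mult (Mn xs) M0"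
proof (induction xs arbitrary: M0)
  case Nil
  show ?case by (cases M0) (simp add: Mn_def mat2_id_def)
next
  case (Cons x xs)
  have "Mn (x # xs) = mat2_mult (Mn xs) (elem_mat x)"
    using Cons.IH[of "mat2_mult (elem_mat x) mat2_id"] by (simp add: Mn_def)
  then show ?case
    by (simp add: Cons.IH mat2_mult_assoc)
qed

lemma Mn_Nil [simp]: "Mn [] = mat2_id"
  by (simp add: Mn_def)

lemma Mn_append: "Mn (xs @ ys) = mat2_mult (Mn ys) (Mn xs)"
proof -
  have "Mn (xs @ ys) = foldl (\<lambda>M a. mat2_mult (elem_mat a) M) (Mn xs) ys"
    by (simp add: Mn_def)
  then show ?thesis
    by (simp only: foldl_elem_mat)
qed

lemma Mn_Cons: "Mn (x # xs) = mat2_mult (Mn xs) (elem_mat x)"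
  using Mn_append[of "[x]" xs] by (simp add: Mn_def mat2_id_def elem_mat_def)

lemma Mn_replicate_2:
  "Mn (replicate m 2) = (1 + of_nat m, - of_nat m, of_nat m, 1 - of_nat m)"
  by (induction m) (simp_all add: Mn_Cons mat2_id_def elem_mat_def algebra_simps)

lemmas Mn_eval = Mn_append Mn_Cons Mn_replicate_2 mat2_id_def elem_mat_def

lemma lower_right_Mn_Cons_snoc: "snd (snd (snd (Mn (x # w @ [y])))) = - fst (Mn w)"
  by (cases "Mn w") (simp add: Mn_eval)

lemma lambda_quiddity_inner_upper_left:
  assumes "lambda_quiddity (x # w @ [y])"
  shows "fst (Mn w) = 1 \<or> fst (Mn w) = -1"
  using assms lower_right_Mn_Cons_snoc[of x w y]
  unfolding lambda_quiddity_def mat2_id_def by (auto simp: minus_equation_iff)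

definition mat2_map :: "('a \<Rightarrow> 'b) \<Rightarrow> 'a mat2 \<Rightarrow> 'b mat2" where
  "mat2_map f = (\<lambda>(a, b, c, d). (f a, f b, f c, f d))"

lemma Mn_map_of_int: "Mn (map of_int w) = mat2_map of_int (Mn w)"
proof (induction w)
  case Nil
  show ?case by (simp add: mat2_map_def mat2_id_def)
next
  case (Cons x w)
  then show ?case
    by (cases "Mn w") (simp add: Mn_Cons mat2_map_def elem_mat_def)
qed

text \<open>The word \<open>s\<close> of the statement for \<open>n = N + 3\<close>, the quiddity of a fan triangulation.\<close>

definition fan_quiddity :: "nat \<Rightarrow> int list" where
  "fan_quiddity N = [1, int N + 1, 1] @ replicate N 2"

lemma rotate_3_fan_quiddity: "rotate 3 (fan_quiddity N) = replicate N 2 @ [1, int N + 1, 1]"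
  using rotate_append[of "[1, int N + 1, 1]" "replicate N 2"]
  by (simp add: fan_quiddity_def numeral_3_eq_3)

lemma rotate_fan_quiddity:
  fixes r N :: nat
  defines "c \<equiv> int N + 1"
  obtains "rotate r (fan_quiddity N) = [c, 1] @ replicate N 2 @ [1]"
  | "rotate r (fan_quiddity N) = [1] @ replicate N 2 @ [1, c]"
  | a b where "a + b = N" "rotate r (fan_quiddity N) = replicate a 2 @ [1, c, 1] @ replicate b 2"
proof -
  define m where "m = r mod (N + 3)"
  have rot: "rotate r (fan_quiddity N) = rotate m (fan_quiddity N)"
    unfolding m_def by (subst rotate_conv_mod) (simp add: fan_quiddity_def add.commute)
  consider "m = 0" | "m = 1" | "m = 2" | i where "m = i + 3" "i \<le> N"
  proof -
    have "m < N + 3"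
      by (simp add: m_def)
    then have "m = 0 \<or> m = 1 \<or> m = 2 \<or> (m = (m - 3) + 3 \<and> m - 3 \<le> N)"
      by linarith
    then show thesis
      using that by blast
  qed
  then show thesis
  proof cases
    case 1
    then show thesis
      using that(3)[of 0 N] rot by (simp add: fan_quiddity_def c_def)
  next
    case 2
    then show thesis
      using that(1) rot by (simp add: fan_quiddity_def c_def)
  next
    case 3
    then show thesis
      using that(2) rot by (simp add: fan_quiddity_def c_def numeral_2_eq_2)
  next
    case 4
    have "rotate 3 (fan_quiddity N) = replicate i 2 @ replicate (N - i) 2 @ [1, c, 1]"
      using \<open>i \<le> N\<close> by (simp add: rotate_3_fan_quiddity c_def flip: replicate_add)
    then have "rotate (i + 3) (fan_quiddity N) = replicate (N - i) 2 @ [1, c, 1] @ replicate i 2"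
      using rotate_append[of "replicate i (2::int)"] by (simp flip: rotate_rotate)
    then show thesis
      using that(3)[of "N - i" i] rot 4 by simp
  qed
qed

lemma window_through_peak:
  fixes a b L :: nat
  defines "w \<equiv> take L (replicate a 2 @ [1, int (a + b) + 1, 1] @ replicate b 2)"
  assumes "1 \<le> L" "L \<le> a + b"
  shows "w = replicate (L - 1) 2 @ [1] \<or> fst (Mn w) \<ge> 2"
proof -
  consider "L \<le> a" | "L = a + 1" | "L = a + 2" | e where "L = a + 3 + e"
  proof -
    have "L \<le> a \<or> L = a + 1 \<or> L = a + 2 \<or> L = a + 3 + (L - a - 3)"
      by linarith
    then show thesis
      using that by blast
  qed
  then show ?thesis
  proof cases
    case 1
    then have "w = replicate L 2"
      by (simp add: w_def)
    then show ?thesis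
      using assms by (simp add: Mn_replicate_2)
  next
    case 2
    then show ?thesis
      by (simp add: w_def)
  next
    case 3
    then have "w = replicate a 2 @ [1, int (a + b) + 1]"
      by (simp add: w_def)
    then show ?thesis
      using 3 assms by (simp add: Mn_eval algebra_simps)
  next
    case 4
    then have "w = replicate a 2 @ [1, int (a + b) + 1, 1] @ replicate e 2"
      using assms by (simp add: w_def min_def numeral_3_eq_3)
    then show ?thesis
      using 4 assms by (simp add: Mn_eval algebra_simps)
  qed
qed

lemma window_from_peak:
  fixes N L :: nat
  assumes "1 \<le> L" "L \<le> N"
  shows "fst (Mn (take L ([int N + 1, 1] @ replicate N 2 @ [1]))) \<ge> 2"
proof (cases L)
  case (Suc e)
  show ?thesis
  proof (cases e)
    case 0
    then show ?thesis
      using Suc assms by (simp add: Mn_eval)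
  next
    case (Suc f)
    then have "take L ([int N + 1, 1] @ replicate N 2 @ [1]) = [int N + 1, 1] @ replicate f 2"
      using \<open>L = Suc e\<close> assms by (simp add: min_def)
    then show ?thesis
      using \<open>L = Suc e\<close> Suc assms by (simp add: Mn_eval algebra_simps)
  qed
qed (use assms in simp)

lemma take_Cons_1_replicate_2:
  assumes "1 \<le> L" "L \<le> N + 1"
  shows "take L ([1] @ replicate N 2 @ [1, c]) = 1 # replicate (L - 1) 2"
  using assms by (cases L) (auto simp: min_def)

lemma fan_quiddity_window:
  fixes N L r :: nat
  defines "w \<equiv> take L (rotate r (fan_quiddity N))"
  assumes "1 \<le> L" "L \<le> N"
  shows "w = 1 # replicate (L - 1) 2 \<or> w = replicate (L - 1) 2 @ [1] \<or> fst (Mn w) \<ge> 2"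
proof (cases rule: rotate_fan_quiddity[of r N])
  case 1
  then show ?thesis
    using window_from_peak[OF assms(2,3)] by (simp add: w_def)
next
  case 2
  then show ?thesis
    using take_Cons_1_replicate_2[of L N "int N + 1"] assms by (simp add: w_def)
next
  case (3 a b)
  then show ?thesis
    using window_through_peak[of L a b] assms by (simp add: w_def)
qed

lemma qsim_fan_quiddity:
  assumes "qsim (map of_int (fan_quiddity N)) ys"
  obtains r where "ys = map of_int (rotate r (fan_quiddity N))"
proof -
  let ?s = "fan_quiddity N"
  obtain r where "ys = rotate r (map of_int ?s) \<or> ys = rotate r (rev (map of_int ?s))"
    using assms unfolding qsim_def by blast
  moreover have "rev ?s = rotate 3 ?s"
    unfolding rotate_3_fan_quiddity by (simp add: fan_quiddity_def)
  then have "rotate r (rev (map of_int ?s)) = map of_int (rotate (r + 3) ?s)"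
    by (simp add: rev_map rotate_map rotate_rotate)
  ultimately show thesis
    using that by (auto simp: rotate_map)
qed

lemma qoplus_Cons_snoc: "\<exists>pre. qoplus as (x # w @ [y]) = pre @ w"
  by (simp add: qoplus_def)

lemma suffix_of_rotate:
  assumes "pre @ w = rotate r xs"
  shows "w = take (length w) (rotate (length pre + r) xs)"
proof -
  have "rotate (length pre + r) xs = rotate (length pre) (pre @ w)"
    by (simp add: assms rotate_rotate)
  also have "\<dots> = w @ pre"
    by (rule rotate_append)
  finally show ?thesis
    by simp
qed

lemma reduction_of_fan_quiddity:
  assumes "qsim (map of_int (fan_quiddity N)) (qoplus cs bs)" "length bs = L + 2"
  obtains x y r where "bs = x # map of_int (take L (rotate r (fan_quiddity N))) @ [y]"
proof -
  obtain x bs' where "bs = x # bs'"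
    using assms(2) by (cases bs) auto
  then obtain w y where bs: "bs = x # w @ [y]"
    using assms(2) by (cases bs' rule: rev_cases) auto
  obtain pre where "qoplus cs bs = pre @ w"
    using qoplus_Cons_snoc bs by blast
  moreover obtain r where "qoplus cs bs = map of_int (rotate r (fan_quiddity N))"
    using assms(1) by (rule qsim_fan_quiddity)
  ultimately have "pre @ w = rotate r (map of_int (fan_quiddity N))"
    by (simp add: rotate_map)
  then have "w = take (length w) (rotate (length pre + r) (map of_int (fan_quiddity N)))"
    by (rule suffix_of_rotate)
  moreover have "length w = L"
    using assms(2) bs by simp
  ultimately show thesis
    using that[of x _ y] bs by (simp add: rotate_map take_map)
qed

theorem lemma4p8:
  fixes bs :: "'a::comm_ring_1 list" and n k :: nat
  assumes char0: "CHAR('a) = 0"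
    and n: "n \<ge> 4"
    and k: "3 \<le> k" "k \<le> n - 1"
    and blen: "length bs = k"
    and bq: "lambda_quiddity bs"
    and red: "\<exists>cs. length cs = n + 2 - k \<and>
               qsim ([1, of_nat n - 2, 1] @ replicate (n - 3) 2) (qoplus cs bs)"
  shows "\<exists>x y :: 'a. bs = [x, 1] @ replicate (k - 3) 2 @ [y]
                  \<or> bs = [x] @ replicate (k - 3) 2 @ [1, y]"
proof -
  have "[1, of_nat n - 2, 1] @ replicate (n - 3) 2
      = (map of_int (fan_quiddity (n - 3)) :: 'a list)"
    using n by (simp add: fan_quiddity_def)
  then obtain cs where "qsim (map of_int (fan_quiddity (n - 3))) (qoplus cs bs)"
    using red by auto
  moreover have "length bs = (k - 2) + 2"
    using blen k by simp
  ultimately obtain x y r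
    where bs: "bs = x # map of_int (take (k - 2) (rotate r (fan_quiddity (n - 3)))) @ [y]"
    by (rule reduction_of_fan_quiddity)
  define w where "w = take (k - 2) (rotate r (fan_quiddity (n - 3)))"
  with bs have bs: "bs = x # map of_int w @ [y]"
    by simp
  have "fst (Mn (map of_int w) :: 'a mat2) = of_int (fst (Mn w))"
    by (cases "Mn w") (simp add: Mn_map_of_int mat2_map_def)
  then have "(of_int (fst (Mn w)) :: 'a) = of_int 1 \<or> (of_int (fst (Mn w)) :: 'a) = of_int (-1)"
    using lambda_quiddity_inner_upper_left bq bs by fastforce
  then have "fst (Mn w) = 1 \<or> fst (Mn w) = -1"
    by (simp only: of_int_eq_iff_CHAR_0[OF char0])
  moreover have
    "w = 1 # replicate (k - 3) 2 \<or> w = replicate (k - 3) 2 @ [1] \<or> 2 \<le> fst (Mn w)"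
    using fan_quiddity_window[of "k - 2" "n - 3" r] k n unfolding w_def
    by (simp add: numeral_3_eq_3 numeral_2_eq_2)
  ultimately have "w = 1 # replicate (k - 3) 2 \<or> w = replicate (k - 3) 2 @ [1]"
    by auto
  then show ?thesis
    using bs by (intro exI[of _ x] exI[of _ y]) auto
qed

end
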